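(* For every natural number $n \geq 0$, $$G_n = \sum_{1 \leq \ell \leq k \leq n} (-1)^{k-1} (\ell-1)!\,(k-\ell)!\, S(n,k).$$ In particular, $G_n$ is an integer for every $n \in \mathbb{N}$.
   Context: The Genocchi numbers $G_n$ ($n \in \mathbb{N}$) are defined by the exponential generating function $\frac{2x}{e^x+1} = \sum_{n=0}^{\infty} G_n \frac{x^n}{n!}$. The Stirling numbers of the second kind $S(n,k)$ ($0 \le k \le n$) are the integers defined by the polynomial identity $X^n = \sum_{k=0}^{n} S(n,k)\, X(X-1)\cdots(X-k+1)$. (For $n=0$ the sum is empty and the claim reads $G_0 = 0$.) *)

theory Defs
  imports Complex_Main "HOL-Computational_Algebra.Formal_Power_Series" "HOL-Combinatorics.Stirling"
begin

definition genocchi_egf :: "real fps" where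
  "genocchi_egf = (2 * fps_X) / (fps_exp 1 + 1)"

definition Genocchi :: "nat \<Rightarrow> real" where
  "Genocchi n = fact n * fps_nth genocchi_egf n"

end

theory Submission
  imports Defs
begin

unbundle fps_syntax

text \<open>Both sides satisfy the recurrence \<open>\<Sum>i\<le>n. (n choose i) X i + X n = 2 [n = 1]\<close>,
  which determines a sequence uniquely. For \<open>G n\<close> it is the coefficient of \<open>x^n/n!\<close>
  in \<open>G(x) (e^x + 1) = 2x\<close>. For the right-hand side \<open>\<Sum>k. c k S(n,k)\<close>, with
  \<open>c k = (-1)^(k-1) \<Sum>l. (l-1)! (k-l)!\<close>, the binomial sum turns \<open>S(i,k)\<close> into
  \<open>S(n+1,k+1)\<close>; the triangular recurrence of \<open>S\<close> and the relation
  \<open>(k+1) c k + 2 c (k+1) = 2 (-1)^k k!\<close> reduce the recurrence to the telescoping identity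
  \<open>\<Sum>m. (-1)^m m! S(n,m+1) = [n = 1]\<close>.\<close>

lemma binomial_recurrence_unique:
  fixes X Y :: "nat \<Rightarrow> 'a :: field_char_0"
  assumes X: "\<And>n. (\<Sum>i\<le>n. of_nat (n choose i) * X i) + X n = r n"
      and Y: "\<And>n. (\<Sum>i\<le>n. of_nat (n choose i) * Y i) + Y n = r n"
  shows "X = Y"
proof
  fix n show "X n = Y n"
  proof (induction n rule: less_induct)
    case (less n)
    have split: "(\<Sum>i\<le>n. of_nat (n choose i) * Z i) + Z n = (\<Sum>i<n. of_nat (n choose i) * Z i) + 2 * Z n"
      for Z :: "nat \<Rightarrow> 'a"
      by (simp add: lessThan_Suc_atMost[symmetric])
    have "(\<Sum>i<n. of_nat (n choose i) * X i) = (\<Sum>i<n. of_nat (n choose i) * Y i)"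
      using less by simp
    with X[of n] Y[of n] have "2 * X n = 2 * Y n"
      unfolding split by (metis add_left_cancel)
    then show ?case by simp
  qed
qed

lemma genocchi_egf_mult: "genocchi_egf * (fps_exp 1 + 1) = 2 * fps_X"
proof -
  have "(fps_exp (1::real) + 1) $ 0 \<noteq> 0" by simp
  thus ?thesis unfolding genocchi_egf_def
    by (simp add: fps_divide_unit mult.assoc inverse_mult_eq_1)
qed

lemma Genocchi_recurrence:
  "(\<Sum>i\<le>n. real (n choose i) * Genocchi i) + Genocchi n = (if n = 1 then 2 else 0)"
proof -
  have exp_part: "fact n * (genocchi_egf * fps_exp 1) $ n = (\<Sum>i\<le>n. real (n choose i) * Genocchi i)"
    unfolding fps_mult_nth atLeast0AtMost sum_distrib_left
  proof (rule sum.cong)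
    fix i assume "i \<in> {..n}"
    hence "real (n choose i) = fact n / (fact i * fact (n - i))" by (simp add: binomial_fact)
    thus "fact n * (genocchi_egf $ i * fps_exp 1 $ (n - i)) = real (n choose i) * Genocchi i"
      by (simp add: Genocchi_def field_simps)
  qed simp
  have "fact n * (genocchi_egf * (fps_exp 1 + 1)) $ n = fact n * (2 * fps_X :: real fps) $ n"
    by (simp add: genocchi_egf_mult)
  also have "\<dots> = (if n = 1 then 2 else 0)"
    by (simp add: fps_mult_left_const_nth fps_numeral_nth)
  finally show ?thesis
    by (simp add: distrib_left exp_part Genocchi_def)
qed

definition fact_convolution :: "nat \<Rightarrow> real" where
  "fact_convolution k = (\<Sum>l\<in>{1..k}. fact (l - 1) * fact (k - l))"

lemma fact_convolution_lessThan: "fact_convolution k = (\<Sum>j<k. fact j * fact (k - 1 - j))"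
  unfolding fact_convolution_def image_Suc_lessThan[symmetric] by (simp add: sum.reindex)

lemma fact_convolution_Suc:
  "real (Suc k) * fact_convolution k = 2 * fact_convolution (Suc k) - 2 * fact k"
proof -
  have "real (Suc k) * fact_convolution k = (\<Sum>j<k. fact j * fact (k - j) + fact (Suc j) * fact (k - Suc j))"
    unfolding fact_convolution_lessThan sum_distrib_left
  proof (rule sum.cong)
    fix j assume "j \<in> {..<k}"
    then obtain d where d: "k = j + Suc d" by (auto dest: less_imp_Suc_add)
    \<comment> \<open>\<open>(j + d + 2) j! d! = j! (d+1)! + (j+1)! d!\<close>\<close>
    show "real (Suc k) * (fact j * fact (k - 1 - j)) = fact j * fact (k - j) + fact (Suc j) * fact (k - Suc j)"
      by (simp add: d algebra_simps)
  qed simp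
  also have "\<dots> = (\<Sum>j<k. fact j * fact (k - j)) + (\<Sum>j<k. fact (Suc j) * fact (k - Suc j))"
    by (simp add: sum.distrib)
  also have "(\<Sum>j<k. fact j * fact (k - j)) = fact_convolution (Suc k) - fact k"
    by (simp add: fact_convolution_lessThan)
  also have "(\<Sum>j<k. fact (Suc j) * fact (k - Suc j)) = fact_convolution (Suc k) - fact k"
    using sum.lessThan_Suc_shift[of "\<lambda>j. fact j * fact (k - j) :: real" k]
    by (simp add: fact_convolution_lessThan)
  finally show ?thesis by simp
qed

definition genocchi_coeff :: "nat \<Rightarrow> real" where
  "genocchi_coeff k = (-1) ^ (k - 1) * fact_convolution k"

lemma genocchi_coeff_0 [simp]: "genocchi_coeff 0 = 0"
  by (simp add: genocchi_coeff_def fact_convolution_def)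

lemma genocchi_coeff_Suc:
  "2 * genocchi_coeff (Suc k) + real (Suc k) * genocchi_coeff k = 2 * (-1) ^ k * fact k"
proof (cases k)
  case 0 then show ?thesis by (simp add: genocchi_coeff_def fact_convolution_def)
next
  case (Suc m)
  hence "2 * genocchi_coeff (Suc k) + real (Suc k) * genocchi_coeff k
       = (-1) ^ k * (2 * fact_convolution (Suc k) - real (Suc k) * fact_convolution k)"
    by (simp add: genocchi_coeff_def algebra_simps)
  also have "\<dots> = 2 * (-1) ^ k * fact k"
    using fact_convolution_Suc[of k] by simp
  finally show ?thesis .
qed

lemma sum_binomial_Stirling: "(\<Sum>i\<le>n. (n choose i) * Stirling i k) = Stirling (Suc n) (Suc k)"
proof (induction n arbitrary: k)
  case 0 then show ?case by (cases k) auto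
next
  case (Suc n)
  have pascal: "(\<Sum>i\<le>Suc n. (Suc n choose i) * g i)
        = (\<Sum>i\<le>n. (n choose i) * g (Suc i)) + (\<Sum>i\<le>n. (n choose i) * g i)"
    for g :: "nat \<Rightarrow> nat"
  proof -
    have "(\<Sum>i\<le>Suc n. (Suc n choose i) * g i)
        = (\<Sum>i\<le>n. (n choose i) * g (Suc i)) + (g 0 + (\<Sum>i\<le>n. (n choose Suc i) * g (Suc i)))"
      unfolding sum.atMost_Suc_shift by (simp add: sum.distrib algebra_simps)
    also have "g 0 + (\<Sum>i\<le>n. (n choose Suc i) * g (Suc i)) = (\<Sum>i\<le>n. (n choose i) * g i)"
      using sum.atMost_Suc_shift[of "\<lambda>i. (n choose i) * g i" n] by (simp add: binomial_eq_0)
    finally show ?thesis .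
  qed
  show ?case
  proof (cases k)
    case 0
    then show ?thesis by (simp add: sum.atMost_Suc_shift del: sum.atMost_Suc Stirling.simps(4))
  next
    case (Suc m)
    have "(\<Sum>i\<le>n. (n choose i) * Stirling (Suc i) k)
        = Suc m * (\<Sum>i\<le>n. (n choose i) * Stirling i k) + (\<Sum>i\<le>n. (n choose i) * Stirling i m)"
      by (simp add: Suc sum_distrib_left sum.distrib[symmetric] algebra_simps)
    then show ?thesis
      using pascal[of "\<lambda>i. Stirling i k"] Suc.IH[of k] Suc.IH[of m] Suc by simp
  qed
qed

lemma alternating_fact_Stirling_sum:
  "(\<Sum>m<n. (-1) ^ m * fact m * real (Stirling n (Suc m))) = (if n = 1 then 1 else 0)"
proof (cases n)
  case 0 then show ?thesis by simp
next
  case (Suc p)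
  let ?T = "\<lambda>m. (-1) ^ m * fact (Suc m) * real (Stirling p (Suc m))"
  have "(\<Sum>m<Suc p. (-1) ^ m * fact m * real (Stirling (Suc p) (Suc m)))
      = (\<Sum>m<Suc p. ?T m) + (\<Sum>m<Suc p. (-1) ^ m * fact m * real (Stirling p m))"
    by (simp add: sum.distrib[symmetric] algebra_simps)
  also have "(\<Sum>m<Suc p. (-1) ^ m * fact m * real (Stirling p m))
      = real (Stirling p 0) - (\<Sum>m<p. ?T m)"
    unfolding sum.lessThan_Suc_shift by (simp add: sum_negf)
  finally show ?thesis using Suc by (cases p) auto
qed

definition genocchi_Stirling_sum :: "nat \<Rightarrow> real" where
  "genocchi_Stirling_sum n = (\<Sum>k\<le>n. genocchi_coeff k * real (Stirling n k))"

lemma genocchi_Stirling_sum_atMost: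
  "i \<le> n \<Longrightarrow> genocchi_Stirling_sum i = (\<Sum>k\<le>n. genocchi_coeff k * real (Stirling i k))"
  unfolding genocchi_Stirling_sum_def by (rule sum.mono_neutral_left) auto

lemma genocchi_Stirling_sum_recurrence:
  "(\<Sum>i\<le>n. real (n choose i) * genocchi_Stirling_sum i) + genocchi_Stirling_sum n
     = (if n = 1 then 2 else 0)"
proof -
  let ?S = "\<lambda>k. real (Stirling n (Suc k))"
  have "(\<Sum>i\<le>n. real (n choose i) * genocchi_Stirling_sum i)
      = (\<Sum>k\<le>n. genocchi_coeff k * (\<Sum>i\<le>n. real ((n choose i) * Stirling i k)))"
    by (simp add: genocchi_Stirling_sum_atMost sum_distrib_left, subst sum.swap)
      (simp add: sum_distrib_left algebra_simps)
  also have "\<dots> = (\<Sum>k\<le>n. genocchi_coeff k * real (Stirling (Suc n) (Suc k)))"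
    by (simp only: of_nat_sum[symmetric] sum_binomial_Stirling)
  finally have "(\<Sum>i\<le>n. real (n choose i) * genocchi_Stirling_sum i) + genocchi_Stirling_sum n
      = (\<Sum>k\<le>n. real (Suc k) * genocchi_coeff k * ?S k)
        + (\<Sum>k\<le>n. 2 * genocchi_coeff k * real (Stirling n k))"
    by (simp add: genocchi_Stirling_sum_def sum.distrib[symmetric] algebra_simps)
  also have "(\<Sum>k\<le>n. real (Suc k) * genocchi_coeff k * ?S k)
      = (\<Sum>k<n. real (Suc k) * genocchi_coeff k * ?S k)"
    by (simp add: lessThan_Suc_atMost[symmetric])
  also have "(\<Sum>k\<le>n. 2 * genocchi_coeff k * real (Stirling n k)) = (\<Sum>k<n. 2 * genocchi_coeff (Suc k) * ?S k)"
    unfolding lessThan_Suc_atMost[symmetric] sum.lessThan_Suc_shift by simp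
  also have "(\<Sum>k<n. real (Suc k) * genocchi_coeff k * ?S k) + (\<Sum>k<n. 2 * genocchi_coeff (Suc k) * ?S k)
      = (\<Sum>k<n. (2 * genocchi_coeff (Suc k) + real (Suc k) * genocchi_coeff k) * ?S k)"
    by (simp add: sum.distrib[symmetric] algebra_simps)
  also have "\<dots> = 2 * (\<Sum>k<n. (-1) ^ k * fact k * ?S k)"
    unfolding genocchi_coeff_Suc by (simp add: sum_distrib_left mult.assoc)
  also have "\<dots> = (if n = 1 then 2 else 0)"
    by (simp add: alternating_fact_Stirling_sum)
  finally show ?thesis .
qed

theorem theorem1:
  fixes n :: nat
  shows "Genocchi n =
           (\<Sum>k\<in>{1..n}. \<Sum>l\<in>{1..k}.
              (-1) ^ (k - 1) * fact (l - 1) * fact (k - l) * real (Stirling n k))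
         \<and> Genocchi n \<in> \<int>"
proof -
  have "Genocchi n = genocchi_Stirling_sum n"
    using binomial_recurrence_unique[OF Genocchi_recurrence genocchi_Stirling_sum_recurrence] by simp
  also have "genocchi_Stirling_sum n = (\<Sum>k\<in>{1..n}. genocchi_coeff k * real (Stirling n k))"
    unfolding genocchi_Stirling_sum_def atMost_atLeast0
    by (simp add: sum.atLeast_Suc_atMost Suc_le_eq)
  also have "\<dots> = (\<Sum>k\<in>{1..n}. \<Sum>l\<in>{1..k}.
              (-1) ^ (k - 1) * fact (l - 1) * fact (k - l) * real (Stirling n k))"
    by (simp add: genocchi_coeff_def fact_convolution_def sum_distrib_left sum_distrib_right mult.assoc)
  finally have "Genocchi n = \<dots>" .
  moreover have "\<dots> \<in> \<int>"
    by (intro Ints_sum Ints_mult Ints_power) (auto simp: fact_in_Ints)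
  ultimately show ?thesis by simp
qed

end
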